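(* Let $N\ge2$, let $\mathcal I$ be a countable set, let $\Sigma=\mathcal I^{\mathbb N}$ with shift $\sigma$, and let $\nu$ be a $\sigma$-invariant ergodic probability measure on $\Sigma$. Let $\mathcal B=\{\mathbf B_i\}_{i\in\mathcal I}$ be a family of nonnegative allowable $N\times N$ matrices which is good with respect to $\nu$. Then the limits $\lambda=\lim_{n\to\infty}\frac1n\log\|\mathbf B_{\overline{\boldsymbol\theta}|_n}\|$ and $\lambda_*=\lim_{n\to\infty}\frac1n\log(\mathbf B_{\overline{\boldsymbol\theta}|_n})_*$ exist and are constant for $\nu$-a.e. $\overline{\boldsymbol\theta}$, and $\lambda=\lambda_*$.
   Context: A nonnegative square matrix is allowable if each row and each column contains a strictly positive entry. For a nonnegative $N\times N$ matrix $\mathbf B$: $\|\mathbf B\|$ is the sum of all entries, $\|\mathbf B\|_1=\max_j\sum_i\mathbf B_{i,j}$ (maximal column sum), $(\mathbf B)_*=\min_j\sum_i\mathbf B_{i,j}$ (minimal column sum). For $\overline{\boldsymbol\theta}=(\theta_1,\theta_2,\dots)\in\Sigma$, $\overline{\boldsymbol\theta}|_n=(\theta_1,\dots,\theta_n)$ and $\mathbf B_{(\theta_1,\dots,\theta_n)}=\mathbf B_{\theta_1}\cdots\mathbf B_{\theta_n}$. The family $\mathcal B$ is good with respect to $\nu$ if (1) $\int|\log\|\mathbf B_{\theta_1}\|_1|\,d\nu(\overline{\boldsymbol\theta})+\int|\log(\mathbf B_{\theta_1})_*|\,d\nu(\overline{\boldsymbol\theta})<\infty$, and (2) there is a finite word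 $\boldsymbol\theta=(\theta_1,\dots,\theta_n)\in\mathcal I^n$ with $\nu(\{\overline{\boldsymbol\theta}:\overline{\boldsymbol\theta}|_n=\boldsymbol\theta\})>0$ such that every entry of $\mathbf B_{\boldsymbol\theta}$ is strictly positive. *)

theory Defs
  imports "HOL-Probability.Probability"
begin

definition shift :: "(nat \<Rightarrow> 'i) \<Rightarrow> (nat \<Rightarrow> 'i)" where
  "shift \<theta> = (\<lambda>k. \<theta> (Suc k))"

definition seq_space :: "(nat \<Rightarrow> 'i) measure" where
  "seq_space = Pi\<^sub>M UNIV (\<lambda>_. count_space UNIV)"

definition shift_invariant :: "(nat \<Rightarrow> 'i) measure \<Rightarrow> bool" where
  "shift_invariant \<nu> \<longleftrightarrow> shift \<in> measurable \<nu> \<nu> \<and>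
     (\<forall>A\<in>sets \<nu>. emeasure \<nu> (shift -` A \<inter> space \<nu>) = emeasure \<nu> A)"

definition shift_ergodic :: "(nat \<Rightarrow> 'i) measure \<Rightarrow> bool" where
  "shift_ergodic \<nu> \<longleftrightarrow>
     (\<forall>A\<in>sets \<nu>. shift -` A \<inter> space \<nu> = A \<longrightarrow> measure \<nu> A = 0 \<or> measure \<nu> A = 1)"

definition nonneg_mat :: "real^'n^'n \<Rightarrow> bool" where
  "nonneg_mat B \<longleftrightarrow> (\<forall>i j. B $ i $ j \<ge> 0)"

definition allowable :: "real^'n^'n \<Rightarrow> bool" where
  "allowable B \<longleftrightarrow> nonneg_mat B \<and> (\<forall>i. \<exists>j. B $ i $ j > 0) \<and> (\<forall>j. \<exists>i. B $ i $ j > 0)"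

definition entry_sum :: "real^'n::finite^'n \<Rightarrow> real" where
  "entry_sum B = (\<Sum>i\<in>UNIV. \<Sum>j\<in>UNIV. B $ i $ j)"

definition max_col_sum :: "real^'n::finite^'n \<Rightarrow> real" where
  "max_col_sum B = Max (range (\<lambda>j. \<Sum>i\<in>UNIV. B $ i $ j))"

definition min_col_sum :: "real^'n::finite^'n \<Rightarrow> real" where
  "min_col_sum B = Min (range (\<lambda>j. \<Sum>i\<in>UNIV. B $ i $ j))"

text \<open>B_{(theta_1..theta_n)} = B_{theta_1} ... B_{theta_n}; here indices start at 0.\<close>
primrec word_prod :: "('i \<Rightarrow> real^'n::finite^'n) \<Rightarrow> (nat \<Rightarrow> 'i) \<Rightarrow> nat \<Rightarrow> real^'n^'n" where
  "word_prod B \<theta> 0 = mat 1"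
| "word_prod B \<theta> (Suc n) = word_prod B \<theta> n ** B (\<theta> n)"

definition good_family :: "('i \<Rightarrow> real^'n::finite^'n) \<Rightarrow> (nat \<Rightarrow> 'i) measure \<Rightarrow> bool" where
  "good_family B \<nu> \<longleftrightarrow>
     (\<integral>\<^sup>+ \<theta>. ennreal \<bar>ln (max_col_sum (B (\<theta> 0)))\<bar> \<partial>\<nu>)
       + (\<integral>\<^sup>+ \<theta>. ennreal \<bar>ln (min_col_sum (B (\<theta> 0)))\<bar> \<partial>\<nu>) < \<infinity>
   \<and> (\<exists>n \<theta>w. emeasure \<nu> {\<theta> \<in> space \<nu>. \<forall>k<n. \<theta> k = \<theta>w k} > 0
          \<and> (\<forall>i j. word_prod B \<theta>w n $ i $ j > 0))"

end

theory Submission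
  imports Defs "HOL-Real_Asymp.Real_Asymp"
begin

(* The entry sum is submultiplicative and the minimal column sum is supermultiplicative, so
   along the shift, ln of the entry sum of the product of the first n matrices and minus ln of
   its minimal column sum are subadditive cocycles.  Both are squeezed between Birkhoff sums of
   ln of the extreme column sums of the first matrix, which are integrable because the family is
   good.  Kingman's subadditive ergodic theorem (a consequence of Birkhoff's theorem through the
   maximal ergodic lemma) gives almost surely constant limits lam and lam_star, and
   lam_star <= lam because the minimal column sum is at most the entry sum.  Conversely, by
   ergodicity almost every orbit visits the cylinder of the strictly positive word infinitely
   often, and a visit at time i gives min_col_sum (B_(theta|i+n0)) >= p * entry_sum (B_(theta|i))
   with p the least entry of the positive word; hence lam <= lam_star. *)

section \<open>Averages of real sequences\<close>

lemma tendsto_average_reindex: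
  fixes s :: "nat \<Rightarrow> real"
  assumes s: "(\<lambda>n. s n / n) \<longlonglongrightarrow> a"
    and r: "filterlim r at_top sequentially" and ratio: "(\<lambda>n. real (r n) / n) \<longlonglongrightarrow> 1"
  shows "(\<lambda>n. s (r n) / n) \<longlonglongrightarrow> a"
proof -
  have "(\<lambda>n. s (r n) / r n * (r n / n)) \<longlonglongrightarrow> a"
    using tendsto_mult[OF filterlim_compose[OF s r] ratio] by simp
  moreover have "eventually (\<lambda>n. s (r n) / r n * (r n / n) = s (r n) / n) sequentially"
    using eventually_compose_filterlim[OF eventually_gt_at_top[of 0] r] by eventually_elim simp
  ultimately show ?thesis
    by (rule Lim_transform_eventually)
qed

lemma tendsto_average_add_index:
  fixes s :: "nat \<Rightarrow> real"
  assumes "(\<lambda>n. s n / n) \<longlonglongrightarrow> a"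
  shows "(\<lambda>n. s (n + k) / n) \<longlonglongrightarrow> a"
  using assms filterlim_add_const_nat_at_top by (rule tendsto_average_reindex) real_asymp

lemma tendsto_average_diff_index:
  fixes s :: "nat \<Rightarrow> real"
  assumes "(\<lambda>n. s n / n) \<longlonglongrightarrow> a"
  shows "(\<lambda>n. s (n - k) / n) \<longlonglongrightarrow> a"
proof (rule tendsto_average_reindex[OF assms])
  show "filterlim (\<lambda>n. n - k) at_top sequentially"
    by (rule filterlim_minus_const_nat_at_top)
  have "eventually (\<lambda>n. real n / n - real k / n = real (n - k) / n) sequentially"
    using eventually_ge_at_top[of k] by eventually_elim (simp add: of_nat_diff diff_divide_distrib)
  moreover have "(\<lambda>n. real n / n - real k / n) \<longlonglongrightarrow> 1"
    by real_asymp
  ultimately show "(\<lambda>n. real (n - k) / n) \<longlonglongrightarrow> 1"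
    by (simp add: tendsto_cong)
qed

lemma average_limit_le_of_frequently:
  fixes a b :: "nat \<Rightarrow> real"
  assumes a: "(\<lambda>n. a n / n) \<longlonglongrightarrow> \<alpha>" and b: "(\<lambda>n. b n / n) \<longlonglongrightarrow> \<beta>"
    and freq: "\<exists>\<^sub>F n in sequentially. a n + c \<le> b (n + k)"
  shows "\<alpha> \<le> \<beta>"
proof (rule ccontr)
  assume "\<not> \<alpha> \<le> \<beta>"
  define m where "m = (\<alpha> + \<beta>) / 2"
  have "(\<lambda>n. a n / n + c / n) \<longlonglongrightarrow> \<alpha> + 0"
    by (intro tendsto_add a tendsto_divide_0[OF tendsto_const]
        filterlim_at_top_imp_at_infinity filterlim_real_sequentially)
  then have "eventually (\<lambda>n. m < (a n + c) / n) sequentially"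
    using \<open>\<not> \<alpha> \<le> \<beta>\<close> by (intro order_tendstoD(1)) (auto simp: m_def add_divide_distrib)
  moreover have "eventually (\<lambda>n. b (n + k) / n < m) sequentially"
    using \<open>\<not> \<alpha> \<le> \<beta>\<close> by (intro order_tendstoD(2)[OF tendsto_average_add_index[OF b]]) (simp add: m_def)
  ultimately have "eventually (\<lambda>n. b (n + k) / n < (a n + c) / n) sequentially"
    by eventually_elim simp
  with freq obtain n where "a n + c \<le> b (n + k)" "b (n + k) / n < (a n + c) / n"
    using frequently_eventually_frequently frequentlyE by blast
  then show False
    using divide_right_mono[of "a n + c" "b (n + k)" "real n"] by simp
qed

section \<open>Birkhoff's ergodic theorem\<close>

locale ergodic_system = prob_space M for M :: "'a measure" +
  fixes T :: "'a \<Rightarrow> 'a"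
  assumes measurable_T [measurable]: "T \<in> M \<rightarrow>\<^sub>M M"
    and space_eq_UNIV: "space M = UNIV"
    and emeasure_vimage_T: "\<And>A. A \<in> sets M \<Longrightarrow> emeasure M (T -` A) = emeasure M A"
    and invariant_trivial: "\<And>A. A \<in> sets M \<Longrightarrow> T -` A = A \<Longrightarrow> measure M A = 0 \<or> measure M A = 1"
begin

lemma measurable_funpow_T [measurable]: "T ^^ n \<in> M \<rightarrow>\<^sub>M M"
  by (induction n) (simp_all add: measurable_ident_sets)

lemma sets_vimage_funpow_T: "A \<in> sets M \<Longrightarrow> (T ^^ n) -` A \<in> sets M"
  using measurable_sets[OF measurable_funpow_T, of A n] space_eq_UNIV by simp

lemma emeasure_vimage_funpow_T: "A \<in> sets M \<Longrightarrow> emeasure M ((T ^^ n) -` A) = emeasure M A"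
proof (induction n)
  case (Suc n)
  have "emeasure M ((T ^^ Suc n) -` A) = emeasure M (T -` ((T ^^ n) -` A))"
    by (simp only: funpow_Suc_right vimage_comp)
  also have "\<dots> = emeasure M ((T ^^ n) -` A)"
    by (rule emeasure_vimage_T[OF sets_vimage_funpow_T[OF Suc.prems]])
  also have "\<dots> = emeasure M A"
    by (rule Suc.IH[OF Suc.prems])
  finally show ?case .
qed simp

lemma distr_funpow_T: "distr M M (T ^^ n) = M"
  by (rule measure_eqI) (simp_all add: emeasure_distr emeasure_vimage_funpow_T space_eq_UNIV)

lemma integrable_comp_funpow_T:
  fixes f :: "'a \<Rightarrow> real"
  assumes "integrable M f" shows "integrable M (\<lambda>x. f ((T ^^ n) x))"
  using assms integrable_distr_eq[OF measurable_funpow_T, of f n] by (simp add: distr_funpow_T)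

lemma integral_comp_funpow_T:
  fixes f :: "'a \<Rightarrow> real"
  assumes "integrable M f" shows "(\<integral>x. f ((T ^^ n) x) \<partial>M) = (\<integral>x. f x \<partial>M)"
  using assms integral_distr[OF measurable_funpow_T, of f n] by (simp add: distr_funpow_T)

lemma measure_subinvariant_0_1:
  assumes S: "S \<in> sets M" and sub: "S \<subseteq> T -` S"
  shows "measure M S = 0 \<or> measure M S = 1"
proof -
  define X where "X n = (T ^^ n) -` S" for n
  have inc: "incseq X"
    using sub by (intro incseq_SucI) (auto simp: X_def)
  have X: "range X \<subseteq> sets M"
    using sets_vimage_funpow_T[OF S] by (auto simp: X_def)
  have "T -` (\<Union>n. X n) = (\<Union>n. X (Suc n))"
    by (auto simp: X_def funpow_swap1)
  also have "\<dots> = (\<Union>n. X n)"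
    using inc unfolding incseq_Suc_iff by blast
  finally have "measure M (\<Union>n. X n) = 0 \<or> measure M (\<Union>n. X n) = 1"
    using X by (intro invariant_trivial) auto
  moreover have "(\<lambda>n. emeasure M (X n)) \<longlonglongrightarrow> emeasure M (\<Union>n. X n)"
    by (rule Lim_emeasure_incseq[OF X inc])
  then have "emeasure M (\<Union>n. X n) = emeasure M S"
    using emeasure_vimage_funpow_T[OF S] by (simp add: X_def LIMSEQ_const_iff)
  ultimately show ?thesis
    by (simp add: measure_def)
qed

lemma measure_superinvariant_0_1:
  assumes S: "S \<in> sets M" and sub: "T -` S \<subseteq> S"
  shows "measure M S = 0 \<or> measure M S = 1"
proof -
  have "UNIV - S \<in> sets M"
    using S space_eq_UNIV by (metis sets.compl_sets)
  moreover have "UNIV - S \<subseteq> T -` (UNIV - S)"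
    using sub by auto
  ultimately have "measure M (UNIV - S) = 0 \<or> measure M (UNIV - S) = 1"
    by (rule measure_subinvariant_0_1)
  then show ?thesis
    using prob_compl[OF S] space_eq_UNIV by auto
qed

definition birkhoff_sum :: "nat \<Rightarrow> ('a \<Rightarrow> real) \<Rightarrow> 'a \<Rightarrow> real" where
  "birkhoff_sum n f x = (\<Sum>i<n. f ((T ^^ i) x))"

lemma birkhoff_sum_0 [simp]: "birkhoff_sum 0 f x = 0"
  by (simp add: birkhoff_sum_def)

lemma birkhoff_sum_Suc: "birkhoff_sum (Suc n) f x = f x + birkhoff_sum n f (T x)"
  unfolding birkhoff_sum_def sum.lessThan_Suc_shift by (simp add: funpow_swap1)

lemma birkhoff_sum_Suc_right: "birkhoff_sum (Suc n) f x = birkhoff_sum n f x + f ((T ^^ n) x)"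
  by (simp add: birkhoff_sum_def)

lemma birkhoff_sum_add: "birkhoff_sum (n + m) f x = birkhoff_sum n f x + birkhoff_sum m f ((T ^^ n) x)"
  by (induction m) (simp_all add: birkhoff_sum_Suc_right funpow_add add.commute)

lemma birkhoff_sum_plus: "birkhoff_sum n (\<lambda>y. f y + h y) x = birkhoff_sum n f x + birkhoff_sum n h x"
  by (simp add: birkhoff_sum_def sum.distrib)

lemma birkhoff_sum_uminus: "birkhoff_sum n (\<lambda>y. - f y) x = - birkhoff_sum n f x"
  by (simp add: birkhoff_sum_def sum_negf)

lemma birkhoff_sum_const: "birkhoff_sum n (\<lambda>y. c) x = n * c"
  by (simp add: birkhoff_sum_def)

lemma birkhoff_sum_diff_const: "birkhoff_sum n (\<lambda>y. f y - c) x = birkhoff_sum n f x - n * c"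
  by (simp add: birkhoff_sum_def sum_subtractf)

lemma birkhoff_sum_mono: "(\<And>y. f y \<le> h y) \<Longrightarrow> birkhoff_sum n f x \<le> birkhoff_sum n h x"
  unfolding birkhoff_sum_def by (intro sum_mono) auto

lemma birkhoff_sum_nonneg: "(\<And>y. 0 \<le> f y) \<Longrightarrow> 0 \<le> birkhoff_sum n f x"
  unfolding birkhoff_sum_def by (intro sum_nonneg) auto

lemma birkhoff_sum_mono_length:
  assumes "\<And>y. 0 \<le> f y" and "m \<le> n"
  shows "birkhoff_sum m f x \<le> birkhoff_sum n f x"
  using birkhoff_sum_add[of m "n - m" f x] birkhoff_sum_nonneg[OF assms(1)] assms(2) by simp

lemma birkhoff_sum_measurable [measurable]:
  assumes [measurable]: "f \<in> borel_measurable M"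
  shows "birkhoff_sum n f \<in> borel_measurable M"
  unfolding birkhoff_sum_def by measurable

lemma integrable_birkhoff_sum: "integrable M f \<Longrightarrow> integrable M (birkhoff_sum n f)"
  unfolding birkhoff_sum_def by (intro Bochner_Integration.integrable_sum integrable_comp_funpow_T)

lemma birkhoff_sum_last_le:
  assumes v: "\<And>y. 0 \<le> v y" and k: "k \<le> n"
  shows "birkhoff_sum (n - k) v ((T ^^ k) x) - birkhoff_sum (n - k - K) v ((T ^^ k) x)
           \<le> birkhoff_sum n v x - birkhoff_sum (n - K) v x"
proof -
  have n: "birkhoff_sum n v x = birkhoff_sum k v x + birkhoff_sum (n - k) v ((T ^^ k) x)"
    using birkhoff_sum_add[of k "n - k" v x] k by simp
  show ?thesis
  proof (cases "k \<le> n - K")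
    case True
    then have "birkhoff_sum (n - K) v x = birkhoff_sum (k + (n - K - k)) v x"
      by (metis le_add_diff_inverse)
    also have "\<dots> = birkhoff_sum k v x + birkhoff_sum (n - k - K) v ((T ^^ k) x)"
      by (simp add: birkhoff_sum_add add.commute)
    finally show ?thesis
      using n by simp
  next
    case False
    then have "birkhoff_sum (n - K) v x \<le> birkhoff_sum k v x"
      by (intro birkhoff_sum_mono_length v) simp
    then show ?thesis
      using n False by simp
  qed
qed

fun max_birkhoff_sum :: "('a \<Rightarrow> real) \<Rightarrow> nat \<Rightarrow> 'a \<Rightarrow> real" where
  "max_birkhoff_sum f 0 x = 0"
| "max_birkhoff_sum f (Suc n) x = max (max_birkhoff_sum f n x) (birkhoff_sum (Suc n) f x)"

lemma birkhoff_sum_le_max_birkhoff_sum: "k \<le> n \<Longrightarrow> birkhoff_sum k f x \<le> max_birkhoff_sum f n x"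
  by (induction n) (auto simp: le_Suc_eq)

lemma max_birkhoff_sum_attained: "\<exists>k\<le>n. max_birkhoff_sum f n x = birkhoff_sum k f x"
  by (induction n) (auto simp: max_def intro: le_SucI)

lemma max_birkhoff_sum_nonneg: "0 \<le> max_birkhoff_sum f n x"
  using birkhoff_sum_le_max_birkhoff_sum[of 0 n f x] by simp

lemma max_birkhoff_sum_le_step:
  assumes "0 < max_birkhoff_sum f n x"
  shows "max_birkhoff_sum f n x \<le> f x + max_birkhoff_sum f n (T x)"
proof -
  obtain k where k: "k \<le> n" "max_birkhoff_sum f n x = birkhoff_sum k f x"
    using max_birkhoff_sum_attained by blast
  with assms obtain j where j: "k = Suc j"
    by (cases k) auto
  have "birkhoff_sum j f (T x) \<le> max_birkhoff_sum f n (T x)"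
    using k j by (intro birkhoff_sum_le_max_birkhoff_sum) auto
  then show ?thesis
    using k j by (simp add: birkhoff_sum_Suc)
qed

lemma max_birkhoff_sum_measurable [measurable]:
  assumes [measurable]: "f \<in> borel_measurable M"
  shows "max_birkhoff_sum f n \<in> borel_measurable M"
  by (induction n) simp_all

lemma integrable_max_birkhoff_sum:
  assumes "integrable M f" shows "integrable M (max_birkhoff_sum f n)"
proof (induction n)
  case 0
  have "max_birkhoff_sum f 0 = (\<lambda>x. 0)"
    by auto
  then show ?case
    by simp
next
  case (Suc n)
  have "max_birkhoff_sum f (Suc n) = (\<lambda>x. max (max_birkhoff_sum f n x) (birkhoff_sum (Suc n) f x))"
    by auto
  then show ?case
    using Suc assms by (simp add: Bochner_Integration.integrable_max integrable_birkhoff_sum)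
qed

text \<open>With F = max_birkhoff_sum f n, the pointwise bound F - F \<circ> T \<le> f on {F > 0} integrates
  to the claim because T preserves the integral of F.\<close>
lemma maximal_ergodic_lemma:
  assumes f: "integrable M f"
  shows "0 \<le> (\<integral>x. indicator {x. 0 < max_birkhoff_sum f n x} x * f x \<partial>M)"
proof -
  let ?F = "max_birkhoff_sum f n"
  let ?A = "{x. 0 < ?F x}"
  have [measurable]: "f \<in> borel_measurable M"
    using f by auto
  have "?A = {x \<in> space M. 0 < ?F x}"
    by (simp add: space_eq_UNIV)
  also have "\<dots> \<in> sets M"
    by measurable
  finally have A: "?A \<in> sets M" .
  have F: "integrable M ?F"
    by (rule integrable_max_birkhoff_sum[OF f])
  have FT: "integrable M (\<lambda>x. ?F ((T ^^ 1) x))"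
    by (rule integrable_comp_funpow_T[OF F])
  have "?F x - ?F (T x) \<le> indicator ?A x * f x" for x
    using max_birkhoff_sum_le_step[of f n x] max_birkhoff_sum_nonneg[of f n x]
      max_birkhoff_sum_nonneg[of f n "T x"]
    by (cases "0 < ?F x") (auto simp: not_less)
  then have "(\<integral>x. ?F x - ?F (T x) \<partial>M) \<le> (\<integral>x. indicator ?A x * f x \<partial>M)"
    using F FT integrable_mult_indicator[OF A f] by (intro integral_mono) auto
  moreover have "(\<integral>x. ?F x - ?F (T x) \<partial>M) = 0"
    using F FT integral_comp_funpow_T[OF F, of 1] by simp
  ultimately show ?thesis
    by simp
qed

definition birkhoff_unbounded :: "('a \<Rightarrow> real) \<Rightarrow> 'a set" where
  "birkhoff_unbounded f = {x. \<forall>C::nat. \<exists>n. real C < birkhoff_sum n f x}"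

lemma birkhoff_unbounded_iff:
  "x \<in> birkhoff_unbounded f \<longleftrightarrow> (\<forall>C::real. \<exists>n. C < birkhoff_sum n f x)"
proof
  assume x: "x \<in> birkhoff_unbounded f"
  show "\<forall>C::real. \<exists>n. C < birkhoff_sum n f x"
  proof
    fix C :: real
    obtain m :: nat where "C < real m"
      using reals_Archimedean2 by blast
    moreover obtain n where "real m < birkhoff_sum n f x"
      using x by (auto simp: birkhoff_unbounded_def)
    ultimately show "\<exists>n. C < birkhoff_sum n f x"
      by (intro exI[of _ n]) simp
  qed
qed (auto simp: birkhoff_unbounded_def)

lemma sets_birkhoff_unbounded [measurable]:
  assumes [measurable]: "f \<in> borel_measurable M"
  shows "birkhoff_unbounded f \<in> sets M"
proof -
  have "birkhoff_unbounded f = {x \<in> space M. \<forall>C::nat. \<exists>n. real C < birkhoff_sum n f x}"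
    by (simp add: birkhoff_unbounded_def space_eq_UNIV)
  also have "\<dots> \<in> sets M"
    by measurable
  finally show ?thesis .
qed

lemma vimage_birkhoff_unbounded: "T -` birkhoff_unbounded f = birkhoff_unbounded f"
proof (intro set_eqI iffI)
  fix x assume x: "x \<in> T -` birkhoff_unbounded f"
  show "x \<in> birkhoff_unbounded f"
    unfolding birkhoff_unbounded_iff
  proof
    fix C :: real
    obtain n where "C - f x < birkhoff_sum n f (T x)"
      using x unfolding birkhoff_unbounded_iff vimage_eq by blast
    then have "C < birkhoff_sum (Suc n) f x"
      by (simp add: birkhoff_sum_Suc)
    then show "\<exists>n. C < birkhoff_sum n f x" ..
  qed
next
  fix x assume x: "x \<in> birkhoff_unbounded f"
  show "x \<in> T -` birkhoff_unbounded f"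
    unfolding birkhoff_unbounded_iff vimage_eq
  proof
    fix C :: real
    obtain n where n: "max C 0 + \<bar>f x\<bar> < birkhoff_sum n f x"
      using x unfolding birkhoff_unbounded_iff by blast
    then obtain m where "n = Suc m"
      by (cases n) auto
    with n have "C < birkhoff_sum m f (T x)"
      by (simp add: birkhoff_sum_Suc)
    then show "\<exists>n. C < birkhoff_sum n f (T x)" ..
  qed
qed

text \<open>Where the Birkhoff sums are unbounded, the indicator of {max_birkhoff_sum f n > 0}
  eventually equals 1; so the maximal ergodic lemma forces a nonnegative integral of f
  unless that set is null.\<close>
lemma birkhoff_unbounded_null:
  assumes f: "integrable M f" and neg: "(\<integral>x. f x \<partial>M) < 0"
  shows "birkhoff_unbounded f \<in> null_sets M"
proof -
  have [measurable]: "f \<in> borel_measurable M"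
    using f by auto
  have U: "birkhoff_unbounded f \<in> sets M"
    by measurable
  have "measure M (birkhoff_unbounded f) \<noteq> 1"
  proof
    assume "measure M (birkhoff_unbounded f) = 1"
    then have U_ae: "AE x in M. x \<in> birkhoff_unbounded f"
      using U by (simp add: prob_eq_1)
    define s where "s n x = indicator {x. 0 < max_birkhoff_sum f n x} x * f x" for n x
    have "(\<lambda>n. \<integral>x. s n x \<partial>M) \<longlonglongrightarrow> (\<integral>x. f x \<partial>M)"
    proof (rule integral_dominated_convergence[where w="\<lambda>x. norm (f x)"])
      show "AE x in M. (\<lambda>n. s n x) \<longlonglongrightarrow> f x"
        using U_ae
      proof eventually_elim
        case (elim x)
        then obtain n where "0 < birkhoff_sum n f x"
          using birkhoff_unbounded_iff by blast
        have "s k x = f x" if "n \<le> k" for k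
          using birkhoff_sum_le_max_birkhoff_sum[OF that, of f x] \<open>0 < birkhoff_sum n f x\<close>
          by (simp add: s_def)
        then have "\<forall>k\<ge>n. s k x = f x"
          by blast
        then show ?case
          by (intro tendsto_eventually) (auto simp: eventually_sequentially)
      qed
      show "AE x in M. norm (s n x) \<le> norm (f x)" for n
        by (simp add: s_def indicator_def)
      show "s n \<in> borel_measurable M" for n
        unfolding s_def by measurable
    qed (use f in auto)
    moreover have "0 \<le> (\<integral>x. s n x \<partial>M)" for n
      unfolding s_def by (rule maximal_ergodic_lemma[OF f])
    ultimately have "0 \<le> (\<integral>x. f x \<partial>M)"
      by (simp add: LIMSEQ_le_const)
    with neg show False
      by simp
  qed
  then have "measure M (birkhoff_unbounded f) = 0"
    using measure_subinvariant_0_1[OF U] vimage_birkhoff_unbounded by auto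
  then show ?thesis
    using U by (simp add: emeasure_eq_measure null_sets_def)
qed

lemma birkhoff_limsup_le:
  assumes f: "integrable M f"
  shows "AE x in M. \<forall>a > (\<integral>x. f x \<partial>M). eventually (\<lambda>n. birkhoff_sum n f x / n < a) sequentially"
proof -
  let ?D = "{d \<in> \<rat>. (\<integral>x. f x \<partial>M) < d}"
  have "AE x in M. \<forall>d\<in>?D. x \<notin> birkhoff_unbounded (\<lambda>x. f x - d)"
  proof (rule AE_ball_countable')
    fix d assume "d \<in> ?D"
    then show "AE x in M. x \<notin> birkhoff_unbounded (\<lambda>x. f x - d)"
      using f by (intro AE_not_in birkhoff_unbounded_null) (auto simp: prob_space)
  qed (rule countable_subset[OF _ countable_rat], auto)
  then show ?thesis
  proof eventually_elim
    case (elim x)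
    show ?case
    proof (intro allI impI)
      fix a assume "(\<integral>x. f x \<partial>M) < a"
      then obtain d where d: "d \<in> ?D" "d < a"
        using Rats_dense_in_real by blast
      then obtain C where C: "\<And>n. birkhoff_sum n f x - n * d \<le> C"
        using elim unfolding birkhoff_unbounded_iff by (auto simp: not_less birkhoff_sum_diff_const)
      have "(\<lambda>n. d + C / real n) \<longlonglongrightarrow> d + 0"
        by (intro tendsto_add tendsto_const tendsto_divide_0[OF tendsto_const]
            filterlim_at_top_imp_at_infinity filterlim_real_sequentially)
      then have "eventually (\<lambda>n. d + C / real n < a) sequentially"
        using d by (intro order_tendstoD(2)) auto
      moreover have "eventually (\<lambda>n. birkhoff_sum n f x / n \<le> d + C / real n) sequentially"
        using eventually_gt_at_top[of 0] by eventually_elim (use C in \<open>auto simp: field_simps\<close>)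
      ultimately show "eventually (\<lambda>n. birkhoff_sum n f x / n < a) sequentially"
        by eventually_elim simp
    qed
  qed
qed

theorem birkhoff_ergodic_theorem:
  assumes f: "integrable M f"
  shows "AE x in M. (\<lambda>n. birkhoff_sum n f x / n) \<longlonglongrightarrow> (\<integral>x. f x \<partial>M)"
proof -
  have "integrable M (\<lambda>x. - f x)"
    using f by simp
  from birkhoff_limsup_le[OF f] birkhoff_limsup_le[OF this] show ?thesis
  proof eventually_elim
    case (elim x)
    show ?case
    proof (rule order_tendstoI)
      fix a assume "a < (\<integral>x. f x \<partial>M)"
      then have "eventually (\<lambda>n. birkhoff_sum n (\<lambda>x. - f x) x / n < - a) sequentially"
        using elim(2) by simp
      then show "eventually (\<lambda>n. a < birkhoff_sum n f x / n) sequentially"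
        by eventually_elim (simp add: birkhoff_sum_uminus)
    qed (use elim(1) in blast)
  qed
qed

lemma AE_frequently_visits:
  assumes C: "C \<in> sets M" and pos: "0 < measure M C"
  shows "AE x in M. \<exists>\<^sub>F i in sequentially. (T ^^ i) x \<in> C"
proof -
  have "integrable M (indicator C :: 'a \<Rightarrow> real)"
    using C by (simp add: integrable_indicator_iff space_eq_UNIV emeasure_eq_measure)
  from birkhoff_ergodic_theorem[OF this]
  have "AE x in M. (\<lambda>n. birkhoff_sum n (indicator C) x / n) \<longlonglongrightarrow> measure M C"
    using C by simp
  then show ?thesis
  proof eventually_elim
    case (elim x)
    show ?case
    proof (rule ccontr)
      assume "\<not> (\<exists>\<^sub>F i in sequentially. (T ^^ i) x \<in> C)"
      then obtain N where N: "\<And>i. N \<le> i \<Longrightarrow> (T ^^ i) x \<notin> C"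
        by (auto simp: not_frequently eventually_sequentially)
      have "birkhoff_sum n (indicator C) x \<le> real N" for n
      proof -
        have "birkhoff_sum n (indicator C) x \<le> (\<Sum>i<n. of_bool (i < N))"
          unfolding birkhoff_sum_def using N
          by (intro sum_mono) (use not_less in \<open>auto simp: indicator_def\<close>)
        also have "\<dots> = real (card ({..<n} \<inter> {i. i < N}))"
          by simp
        also have "\<dots> \<le> real N"
          using card_mono[of "{..<N}" "{..<n} \<inter> {i. i < N}"] by auto
        finally show ?thesis .
      qed
      then have "birkhoff_sum n (indicator C) x / n \<le> real N / n" for n
        by (simp add: divide_right_mono)
      moreover have "(\<lambda>n. real N / real n) \<longlonglongrightarrow> 0"
        by (intro tendsto_divide_0[OF tendsto_const]
            filterlim_at_top_imp_at_infinity filterlim_real_sequentially)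
      ultimately have "measure M C \<le> 0"
        using elim by (intro LIMSEQ_le[OF elim]) auto
      with pos show False
        by simp
    qed
  qed
qed

end

section \<open>Kingman's subadditive ergodic theorem\<close>

text \<open>The integrable lower bound l keeps the limit finite; without it Kingman's limit may be
  \<open>-\<infinity>\<close>.\<close>
locale subadditive_cocycle = ergodic_system +
  fixes g :: "nat \<Rightarrow> 'a \<Rightarrow> real" and u l :: "'a \<Rightarrow> real"
  assumes measurable_g [measurable]: "\<And>n. g n \<in> borel_measurable M"
    and g_0: "\<And>x. g 0 x = 0"
    and subadditive: "\<And>n m x. g (n + m) x \<le> g n x + g m ((T ^^ n) x)"
    and integrable_u: "integrable M u" and g_1_le: "\<And>x. g 1 x \<le> u x"
    and integrable_l: "integrable M l" and birkhoff_sum_le_g: "\<And>n x. birkhoff_sum n l x \<le> g n x"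
begin

lemma g_le_birkhoff_sum: "g n x \<le> birkhoff_sum n u x"
proof (induction n arbitrary: x)
  case (Suc n)
  have "g (n + 1) x \<le> g n x + g 1 ((T ^^ n) x)"
    by (rule subadditive)
  also have "\<dots> \<le> birkhoff_sum n u x + u ((T ^^ n) x)"
    using Suc g_1_le by (intro add_mono) auto
  finally show ?case
    by (simp add: birkhoff_sum_Suc_right)
qed (simp add: g_0)

text \<open>The set where liminf g n x / n < q; the rational witness r makes it measurable.\<close>
definition liminf_below :: "real \<Rightarrow> 'a set" where
  "liminf_below q = {x. \<exists>r\<in>\<rat>. r < q \<and> (\<exists>\<^sub>F n in sequentially. g n x < n * r)}"

lemma sets_liminf_below [measurable]: "liminf_below q \<in> sets M"
proof -
  have "liminf_below q = {x\<in>space M. \<exists>r\<in>{r\<in>\<rat>. r < q}. \<forall>N::nat. \<exists>n\<ge>N. g n x < n * r}"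
    by (auto simp: liminf_below_def frequently_sequentially space_eq_UNIV)
  also have "\<dots> \<in> sets M"
    by (intro sets.sets_Collect_countable_Ex' countable_subset[OF _ countable_rat]) auto
  finally show ?thesis .
qed

lemma vimage_liminf_below_subset: "T -` liminf_below q \<subseteq> liminf_below q"
proof
  fix x assume "x \<in> T -` liminf_below q"
  then obtain r where r: "r \<in> \<rat>" "r < q" and freq: "\<forall>N. \<exists>n\<ge>N. g n (T x) < n * r"
    by (auto simp: liminf_below_def frequently_sequentially)
  obtain r' where r': "r' \<in> \<rat>" "r < r'" "r' < q"
    using Rats_dense_in_real[OF r(2)] by blast
  obtain K :: nat where K: "(g 1 x - r') / (r' - r) < K"
    using reals_Archimedean2 by blast
  have "\<exists>n\<ge>N. g n x < n * r'" for N
  proof -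
    obtain n where n: "n \<ge> max N K" "g n (T x) < n * r"
      using freq by blast
    have "g (Suc n) x \<le> g 1 x + g n (T x)"
      using subadditive[of 1 n x] by simp
    also have "\<dots> < g 1 x + n * r"
      using n by simp
    also have "\<dots> \<le> Suc n * r'"
    proof -
      have "g 1 x - r' < K * (r' - r)"
        using K r' by (simp add: field_simps)
      also have "\<dots> \<le> n * (r' - r)"
        using n r' by (intro mult_right_mono) auto
      finally show ?thesis
        by (simp add: algebra_simps)
    qed
    finally show ?thesis
      using n by (intro exI[of _ "Suc n"]) auto
  qed
  then show "x \<in> liminf_below q"
    using r' by (auto simp: liminf_below_def frequently_sequentially)
qed

lemma measure_liminf_below_0_1: "measure M (liminf_below q) = 0 \<or> measure M (liminf_below q) = 1"
  by (rule measure_superinvariant_0_1[OF sets_liminf_below vimage_liminf_below_subset])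

lemma measure_liminf_below_eq_0:
  assumes "q \<le> (\<integral>x. l x \<partial>M)"
  shows "measure M (liminf_below q) = 0"
proof -
  have "AE x in M. x \<notin> liminf_below q"
    using birkhoff_ergodic_theorem[OF integrable_l]
  proof eventually_elim
    case (elim x)
    show "x \<notin> liminf_below q"
    proof
      assume "x \<in> liminf_below q"
      then obtain r :: real where "r < q" and freq: "\<exists>\<^sub>F n in sequentially. g n x < n * r"
        by (auto simp: liminf_below_def)
      then have "eventually (\<lambda>n. r < birkhoff_sum n l x / n) sequentially"
        using order_tendstoD(1)[OF elim] assms by simp
      with eventually_gt_at_top[of 0]
      have "eventually (\<lambda>n. n * r < g n x) sequentially"
      proof eventually_elim
        case (elim n)
        then have "n * r < birkhoff_sum n l x"
          by (simp add: field_simps)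
        with birkhoff_sum_le_g[of n x] show ?case
          by simp
      qed
      with freq have "\<exists>\<^sub>F n in sequentially. False"
        by (rule frequently_eventually_frequently[THEN frequently_elim1]) auto
      then show False
        by simp
    qed
  qed
  then show ?thesis
    by (simp add: AE_iff_measurable[OF sets_liminf_below] space_eq_UNIV emeasure_eq_measure)
qed

lemma measure_liminf_below_eq_1:
  assumes "(\<integral>x. u x \<partial>M) < q"
  shows "measure M (liminf_below q) = 1"
proof -
  obtain r where r: "r \<in> \<rat>" "(\<integral>x. u x \<partial>M) < r" "r < q"
    using Rats_dense_in_real[OF assms] by blast
  have "AE x in M. x \<in> liminf_below q"
    using birkhoff_ergodic_theorem[OF integrable_u]
  proof eventually_elim
    case (elim x)
    have "eventually (\<lambda>n. birkhoff_sum n u x / n < r) sequentially"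
      using order_tendstoD(2)[OF elim r(2)] .
    with eventually_gt_at_top[of 0]
    have "eventually (\<lambda>n. g n x < n * r) sequentially"
    proof eventually_elim
      case (elim n)
      then have "birkhoff_sum n u x < n * r"
        by (simp add: field_simps)
      with g_le_birkhoff_sum[of n x] show ?case
        by simp
    qed
    then show "x \<in> liminf_below q"
      using r by (auto simp: liminf_below_def dest: eventually_frequently[OF sequentially_bot])
  qed
  then show ?thesis
    by (simp add: prob_eq_1)
qed

definition exceeds_upto :: "real \<Rightarrow> nat \<Rightarrow> 'a set" where
  "exceeds_upto q K = {x. \<forall>k\<in>{1..K}. k * q < g k x}"

definition cover_excess :: "real \<Rightarrow> 'a \<Rightarrow> real" where
  "cover_excess q x = max (u x) 0 + \<bar>q\<bar>"

definition cover_weight :: "real \<Rightarrow> nat \<Rightarrow> 'a \<Rightarrow> real" where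
  "cover_weight q K x = (if x \<in> exceeds_upto q K then cover_excess q x else q)"

lemma sets_exceeds_upto [measurable]: "exceeds_upto q K \<in> sets M"
proof -
  have "exceeds_upto q K = {x\<in>space M. \<forall>k\<in>{1..K}. k * q < g k x}"
    by (simp add: exceeds_upto_def space_eq_UNIV)
  also have "\<dots> \<in> sets M"
    by measurable
  finally show ?thesis .
qed

lemma cover_excess_nonneg: "0 \<le> cover_excess q x"
  by (simp add: cover_excess_def)

lemma le_cover_weight: "q \<le> cover_weight q K x"
  by (auto simp: cover_weight_def cover_excess_def)

lemma le_cover_weight_plus_excess: "u x \<le> cover_weight q K x + cover_excess q x"
  by (auto simp: cover_weight_def cover_excess_def)

lemma integrable_cover_excess: "integrable M (cover_excess q)"
  unfolding cover_excess_def
  by (intro Bochner_Integration.integrable_add Bochner_Integration.integrable_max integrable_u) auto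

lemma integrable_cover_weight: "integrable M (cover_weight q K)"
proof -
  have eq: "cover_weight q K = (\<lambda>x. q + (cover_excess q x - q) * indicator (exceeds_upto q K) x)"
    by (auto simp: fun_eq_iff cover_weight_def)
  show ?thesis
    unfolding eq by (intro Bochner_Integration.integrable_add Bochner_Integration.integrable_diff
        integrable_const integrable_real_mult_indicator sets_exceeds_upto integrable_cover_excess)
qed

lemma cover_step: "\<exists>k\<ge>1. k \<le> max 1 K \<and> g k x \<le> birkhoff_sum k (cover_weight q K) x"
proof (cases "x \<in> exceeds_upto q K")
  case True
  then have "g 1 x \<le> birkhoff_sum 1 (cover_weight q K) x"
    using g_1_le[of x] by (simp add: birkhoff_sum_def cover_weight_def cover_excess_def)
  then show ?thesis
    by auto
next
  case False
  then obtain k where k: "1 \<le> k" "k \<le> K" "g k x \<le> k * q"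
    by (auto simp: exceeds_upto_def not_less)
  have "k * q = birkhoff_sum k (\<lambda>y. q) x"
    by (simp add: birkhoff_sum_const)
  also have "\<dots> \<le> birkhoff_sum k (cover_weight q K) x"
    by (intro birkhoff_sum_mono le_cover_weight)
  finally show ?thesis
    using k by (intro exI[of _ k]) auto
qed

text \<open>Covering argument: the orbit segment of length n is cut into the blocks given by cover_step,
  single steps paid for by u at points of exceeds_upto q K and blocks of length k \<le> K with
  g k \<le> k q elsewhere; only the last K steps may not fit, and they are paid for by cover_excess.\<close>
lemma g_le_cover_sums:
  "g n x \<le> birkhoff_sum n (cover_weight q K) x
            + (birkhoff_sum n (cover_excess q) x - birkhoff_sum (n - K) (cover_excess q) x)"
proof (induction n arbitrary: x rule: less_induct)
  case (less n)
  let ?w = "cover_weight q K" and ?v = "cover_excess q"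
  obtain k where k: "1 \<le> k" "k \<le> max 1 K" "g k x \<le> birkhoff_sum k ?w x"
    using cover_step by blast
  show ?case
  proof (cases "k \<le> n")
    case True
    let ?y = "(T ^^ k) x"
    have "g n x \<le> g k x + g (n - k) ?y"
      using subadditive[of k "n - k" x] True by simp
    also have "\<dots> \<le> birkhoff_sum k ?w x
        + (birkhoff_sum (n - k) ?w ?y + (birkhoff_sum (n - k) ?v ?y - birkhoff_sum (n - k - K) ?v ?y))"
      using k True by (intro add_mono less.IH) auto
    also have "\<dots> \<le> birkhoff_sum n ?w x + (birkhoff_sum n ?v x - birkhoff_sum (n - K) ?v x)"
      using birkhoff_sum_add[of k "n - k" ?w x] birkhoff_sum_last_le[of ?v k n x K]
        cover_excess_nonneg True by simp
    finally show ?thesis .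
  next
    case False
    then have "n - K = 0"
      using k by auto
    have "g n x \<le> birkhoff_sum n u x"
      by (rule g_le_birkhoff_sum)
    also have "\<dots> \<le> birkhoff_sum n (\<lambda>y. ?w y + ?v y) x"
      by (intro birkhoff_sum_mono le_cover_weight_plus_excess)
    finally show ?thesis
      using \<open>n - K = 0\<close> by (simp add: birkhoff_sum_plus)
  qed
qed

lemma tendsto_integral_cover_weight:
  assumes "measure M (liminf_below q) = 1"
  shows "(\<lambda>K. \<integral>x. cover_weight q K x \<partial>M) \<longlonglongrightarrow> q"
proof -
  have "(\<lambda>K. \<integral>x. cover_weight q K x \<partial>M) \<longlonglongrightarrow> (\<integral>x. q \<partial>M)"
  proof (rule integral_dominated_convergence[where w="\<lambda>x. \<bar>u x\<bar> + \<bar>q\<bar>"])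
    show "integrable M (\<lambda>x. \<bar>u x\<bar> + \<bar>q\<bar>)"
      by (intro Bochner_Integration.integrable_add integrable_abs integrable_u) auto
    show "cover_weight q K \<in> borel_measurable M" for K
      using integrable_cover_weight by auto
    show "AE x in M. norm (cover_weight q K x) \<le> \<bar>u x\<bar> + \<bar>q\<bar>" for K
      by (auto simp: cover_weight_def cover_excess_def)
    have "AE x in M. x \<in> liminf_below q"
      using assms by (simp add: prob_eq_1)
    then show "AE x in M. (\<lambda>K. cover_weight q K x) \<longlonglongrightarrow> q"
    proof eventually_elim
      case (elim x)
      then obtain r :: real where "r < q" and "\<forall>N. \<exists>n\<ge>N. g n x < n * r"
        by (auto simp: liminf_below_def frequently_sequentially)
      then obtain n where "1 \<le> n" "g n x < n * r"
        by blast
      moreover have "n * r \<le> n * q"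
        using \<open>r < q\<close> by (intro mult_left_mono) auto
      ultimately have "g n x < n * q"
        by linarith
      with \<open>1 \<le> n\<close> have "\<forall>K\<ge>n. x \<notin> exceeds_upto q K"
        by (auto simp: exceeds_upto_def intro!: bexI[of _ n])
      then have "\<forall>K\<ge>n. cover_weight q K x = q"
        by (simp add: cover_weight_def)
      then show ?case
        by (intro tendsto_eventually) (auto simp: eventually_sequentially)
    qed
  qed simp
  then show ?thesis
    by (simp add: prob_space)
qed

lemma limsup_le_of_liminf_below:
  assumes "measure M (liminf_below q) = 1"
  shows "AE x in M. \<forall>a>q. eventually (\<lambda>n. g n x / n < a) sequentially"
proof -
  let ?w = "cover_weight q" and ?v = "cover_excess q"
  have "AE x in M. \<forall>K. (\<lambda>n. birkhoff_sum n (?w K) x / n) \<longlonglongrightarrow> (\<integral>x. ?w K x \<partial>M)"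
    by (subst AE_all_countable) (intro allI birkhoff_ergodic_theorem integrable_cover_weight)
  moreover have "AE x in M. (\<lambda>n. birkhoff_sum n ?v x / n) \<longlonglongrightarrow> (\<integral>x. ?v x \<partial>M)"
    by (intro birkhoff_ergodic_theorem integrable_cover_excess)
  ultimately show ?thesis
  proof eventually_elim
    case (elim x)
    show ?case
    proof (intro allI impI)
      fix a assume "q < a"
      then obtain K where K: "(\<integral>x. ?w K x \<partial>M) < a"
        using order_tendstoD(2)[OF tendsto_integral_cover_weight[OF assms]]
        by (auto simp: eventually_sequentially)
      let ?R = "\<lambda>n. birkhoff_sum n (?w K) x / n + birkhoff_sum n ?v x / n - birkhoff_sum (n - K) ?v x / n"
      have "?R \<longlonglongrightarrow> (\<integral>x. ?w K x \<partial>M) + (\<integral>x. ?v x \<partial>M) - (\<integral>x. ?v x \<partial>M)"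
        by (intro tendsto_diff tendsto_add elim(1)[rule_format] elim(2) tendsto_average_diff_index)
      then have "eventually (\<lambda>n. ?R n < a) sequentially"
        using K by (intro order_tendstoD(2)) auto
      then show "eventually (\<lambda>n. g n x / n < a) sequentially"
      proof eventually_elim
        case (elim n)
        have "g n x / n \<le> (birkhoff_sum n (?w K) x
            + (birkhoff_sum n ?v x - birkhoff_sum (n - K) ?v x)) / n"
          by (intro divide_right_mono g_le_cover_sums) simp
        also have "\<dots> = ?R n"
          by (simp add: add_divide_distrib diff_divide_distrib)
        finally show ?case
          using elim by linarith
      qed
    qed
  qed
qed

definition kingman_levels :: "real set" where
  "kingman_levels = {q \<in> \<rat>. measure M (liminf_below q) = 1}"

definition kingman_constant :: real where
  "kingman_constant = Inf kingman_levels"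

lemma
  shows kingman_levels_nonempty: "kingman_levels \<noteq> {}"
    and kingman_levels_bdd_below: "bdd_below kingman_levels"
proof -
  obtain q where "q \<in> \<rat>" "(\<integral>x. u x \<partial>M) < q"
    using Rats_dense_in_real[of "\<integral>x. u x \<partial>M" "(\<integral>x. u x \<partial>M) + 1"] by auto
  then show "kingman_levels \<noteq> {}"
    using measure_liminf_below_eq_1 by (auto simp: kingman_levels_def)
  show "bdd_below kingman_levels"
  proof (rule bdd_belowI[of _ "\<integral>x. l x \<partial>M"])
    fix q assume "q \<in> kingman_levels"
    then show "(\<integral>x. l x \<partial>M) \<le> q"
      using measure_liminf_below_eq_0[of q] by (force simp: kingman_levels_def)
  qed
qed

lemma AE_limsup_le_kingman_constant:
  "AE x in M. \<forall>a > kingman_constant. eventually (\<lambda>n. g n x / n < a) sequentially"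
proof -
  have "AE x in M. \<forall>q\<in>kingman_levels. \<forall>a>q. eventually (\<lambda>n. g n x / n < a) sequentially"
    by (rule AE_ball_countable')
      (auto simp: kingman_levels_def intro: limsup_le_of_liminf_below countable_subset[OF _ countable_rat])
  then show ?thesis
  proof eventually_elim
    case (elim x)
    show ?case
    proof (intro allI impI)
      fix a assume "kingman_constant < a"
      then obtain q where "q \<in> kingman_levels" "q < a"
        using cInf_less_iff[OF kingman_levels_nonempty kingman_levels_bdd_below]
        by (auto simp: kingman_constant_def)
      with elim show "eventually (\<lambda>n. g n x / n < a) sequentially"
        by blast
    qed
  qed
qed

lemma AE_liminf_ge_kingman_constant:
  "AE x in M. \<forall>a < kingman_constant. eventually (\<lambda>n. a < g n x / n) sequentially"
proof -
  have "AE x in M. \<forall>q\<in>\<rat> - kingman_levels. x \<notin> liminf_below q"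
  proof (rule AE_ball_countable')
    fix q assume "q \<in> \<rat> - kingman_levels"
    then have "measure M (liminf_below q) = 0"
      using measure_liminf_below_0_1[of q] by (auto simp: kingman_levels_def)
    then show "AE x in M. x \<notin> liminf_below q"
      by (intro AE_not_in) (simp add: null_sets_def emeasure_eq_measure)
  qed (auto intro: countable_subset[OF _ countable_rat])
  then show ?thesis
  proof eventually_elim
    case (elim x)
    show ?case
    proof (intro allI impI)
      fix a assume "a < kingman_constant"
      then obtain q where q: "q \<in> \<rat>" "a < q" "q < kingman_constant"
        using Rats_dense_in_real by blast
      then obtain r where r: "r \<in> \<rat>" "a < r" "r < q"
        using Rats_dense_in_real by blast
      have "q \<notin> kingman_levels"
        using q cInf_lower[OF _ kingman_levels_bdd_below, of q] by (auto simp: kingman_constant_def)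
      with elim q r have "\<not> (\<exists>\<^sub>F n in sequentially. g n x < n * r)"
        by (auto simp: liminf_below_def kingman_levels_def)
      with eventually_gt_at_top[of 0]
      show "eventually (\<lambda>n. a < g n x / n) sequentially"
        unfolding not_frequently
      proof eventually_elim
        case (elim n)
        then have "r \<le> g n x / n"
          by (simp add: field_simps)
        with r show ?case
          by simp
      qed
    qed
  qed
qed

theorem kingman_subadditive_ergodic:
  "AE x in M. (\<lambda>n. g n x / n) \<longlonglongrightarrow> kingman_constant"
  using AE_limsup_le_kingman_constant AE_liminf_ge_kingman_constant
  by eventually_elim (auto intro: order_tendstoI)

end

lemma (in ergodic_system) kingman_submultiplicative:
  fixes F :: "nat \<Rightarrow> 'a \<Rightarrow> real"
  assumes F_measurable [measurable]: "\<And>n. F n \<in> borel_measurable M"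
    and F_pos: "\<And>n x. 0 < F n x"
    and submultiplicative: "\<And>n m x. F (n + m) x \<le> F n x * F m ((T ^^ n) x)"
    and "integrable M u" and "\<And>x. ln (F 1 x) \<le> u x"
    and "integrable M l" and "\<And>n x. birkhoff_sum n l x \<le> ln (F n x)"
  shows "\<exists>c. AE x in M. (\<lambda>n. ln (F n x) / n) \<longlonglongrightarrow> c"
proof -
  \<comment> \<open>F 0 need not be 1, so the cocycle is reset to 0 at n = 0.\<close>
  define g where "g n x = (if n = 0 then 0 else ln (F n x))" for n x
  interpret subadditive_cocycle M T g u l
  proof unfold_locales
    show "g n \<in> borel_measurable M" for n
      unfolding g_def by measurable
    show "g (n + m) x \<le> g n x + g m ((T ^^ n) x)" for n m x
    proof -
      have "ln (F (n + m) x) \<le> ln (F n x * F m ((T ^^ n) x))"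
        using submultiplicative F_pos by (simp add: mult_pos_pos)
      also have "\<dots> = ln (F n x) + ln (F m ((T ^^ n) x))"
        using F_pos[of n x] F_pos[of m "(T ^^ n) x"] by (simp add: ln_mult)
      finally show ?thesis
        by (simp add: g_def)
    qed
  qed (use assms in \<open>simp_all add: g_def\<close>)
  have "(\<lambda>n. g n x / n) = (\<lambda>n. ln (F n x) / n)" for x
    by (simp add: g_def fun_eq_iff)
  then show ?thesis
    using kingman_subadditive_ergodic by auto
qed

section \<open>Column sums of nonnegative matrices\<close>

definition col_sum :: "real^'n::finite^'n \<Rightarrow> 'n \<Rightarrow> real" where
  "col_sum A j = (\<Sum>i\<in>UNIV. A $ i $ j)"

lemma col_sum_matrix_mult: "col_sum (A ** B) j = (\<Sum>k\<in>UNIV. col_sum A k * B $ k $ j)"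
  unfolding col_sum_def matrix_matrix_mult_def by (simp add: sum_distrib_right) (rule sum.swap)

lemma entry_sum_eq_sum_col_sum: "entry_sum A = (\<Sum>j\<in>UNIV. col_sum A j)"
  unfolding entry_sum_def col_sum_def by (rule sum.swap)

lemma col_sum_mat_1: "col_sum (mat 1 :: real^'n::finite^'n) j = 1"
  unfolding col_sum_def mat_def by (simp add: if_distrib cong: if_cong)

lemma min_col_sum_le_col_sum: "min_col_sum A \<le> col_sum A j"
  unfolding min_col_sum_def col_sum_def by (intro Min_le) auto

lemma col_sum_le_max_col_sum: "col_sum A j \<le> max_col_sum A"
  unfolding max_col_sum_def col_sum_def by (intro Max_ge) auto

lemma min_col_sum_attained: "\<exists>j. min_col_sum A = col_sum A j"
proof -
  have "min_col_sum A \<in> range (col_sum A)"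
    unfolding min_col_sum_def col_sum_def by (intro Min_in) auto
  then show ?thesis
    by auto
qed

lemma max_col_sum_attained: "\<exists>j. max_col_sum A = col_sum A j"
proof -
  have "max_col_sum A \<in> range (col_sum A)"
    unfolding max_col_sum_def col_sum_def by (intro Max_in) auto
  then show ?thesis
    by auto
qed

lemma min_col_sum_mat_1: "min_col_sum (mat 1 :: real^'n::finite^'n) = 1"
  using min_col_sum_attained[of "mat 1 :: real^'n^'n"] col_sum_mat_1 by metis

lemma max_col_sum_mat_1: "max_col_sum (mat 1 :: real^'n::finite^'n) = 1"
  using max_col_sum_attained[of "mat 1 :: real^'n^'n"] col_sum_mat_1 by metis

lemma min_col_sum_le_max_col_sum: "min_col_sum A \<le> max_col_sum A"
  using min_col_sum_le_col_sum col_sum_le_max_col_sum order_trans by metis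

lemma entry_sum_le_card_max_col_sum: "entry_sum A \<le> CARD('n) * max_col_sum (A :: real^'n::finite^'n)"
proof -
  have "entry_sum A \<le> (\<Sum>j\<in>(UNIV::'n set). max_col_sum A)"
    unfolding entry_sum_eq_sum_col_sum by (intro sum_mono col_sum_le_max_col_sum)
  then show ?thesis
    by simp
qed

lemma nonneg_mat_mat_1: "nonneg_mat (mat 1 :: real^'n::finite^'n)"
  unfolding nonneg_mat_def mat_def by simp

lemma nonneg_mat_mult: "nonneg_mat A \<Longrightarrow> nonneg_mat B \<Longrightarrow> nonneg_mat (A ** B)"
  unfolding nonneg_mat_def matrix_matrix_mult_def by (auto intro!: sum_nonneg)

lemma col_sum_nonneg: "nonneg_mat A \<Longrightarrow> 0 \<le> col_sum A j"
  unfolding nonneg_mat_def col_sum_def by (auto intro!: sum_nonneg)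

lemma min_col_sum_nonneg: "nonneg_mat A \<Longrightarrow> 0 \<le> min_col_sum A"
  using min_col_sum_attained[of A] col_sum_nonneg by metis

lemma max_col_sum_nonneg: "nonneg_mat A \<Longrightarrow> 0 \<le> max_col_sum A"
  using max_col_sum_attained[of A] col_sum_nonneg by metis

lemma col_sum_le_entry_sum: "nonneg_mat A \<Longrightarrow> col_sum A j \<le> entry_sum A"
  unfolding entry_sum_eq_sum_col_sum by (rule member_le_sum) (auto intro: col_sum_nonneg)

lemma min_col_sum_le_entry_sum: "nonneg_mat A \<Longrightarrow> min_col_sum A \<le> entry_sum A"
  using min_col_sum_le_col_sum col_sum_le_entry_sum order_trans by metis

lemma min_col_sum_mult:
  assumes A: "nonneg_mat A" and B: "nonneg_mat B"
  shows "min_col_sum A * min_col_sum B \<le> min_col_sum (A ** B)"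
proof -
  obtain j where j: "min_col_sum (A ** B) = col_sum (A ** B) j"
    using min_col_sum_attained by blast
  have "min_col_sum A * min_col_sum B \<le> min_col_sum A * col_sum B j"
    using min_col_sum_nonneg[OF A] min_col_sum_le_col_sum by (intro mult_left_mono) auto
  also have "\<dots> = (\<Sum>k\<in>UNIV. min_col_sum A * B $ k $ j)"
    unfolding col_sum_def by (simp add: sum_distrib_left)
  also have "\<dots> \<le> (\<Sum>k\<in>UNIV. col_sum A k * B $ k $ j)"
    using B unfolding nonneg_mat_def by (intro sum_mono mult_right_mono min_col_sum_le_col_sum) auto
  also have "\<dots> = min_col_sum (A ** B)"
    using j by (simp add: col_sum_matrix_mult)
  finally show ?thesis .
qed

lemma max_col_sum_mult:
  assumes A: "nonneg_mat A" and B: "nonneg_mat B"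
  shows "max_col_sum (A ** B) \<le> max_col_sum A * max_col_sum B"
proof -
  obtain j where j: "max_col_sum (A ** B) = col_sum (A ** B) j"
    using max_col_sum_attained by blast
  have "max_col_sum (A ** B) = (\<Sum>k\<in>UNIV. col_sum A k * B $ k $ j)"
    using j by (simp add: col_sum_matrix_mult)
  also have "\<dots> \<le> (\<Sum>k\<in>UNIV. max_col_sum A * B $ k $ j)"
    using B unfolding nonneg_mat_def by (intro sum_mono mult_right_mono col_sum_le_max_col_sum) auto
  also have "\<dots> = max_col_sum A * col_sum B j"
    unfolding col_sum_def by (simp add: sum_distrib_left)
  also have "\<dots> \<le> max_col_sum A * max_col_sum B"
    using max_col_sum_nonneg[OF A] col_sum_le_max_col_sum by (intro mult_left_mono) auto
  finally show ?thesis .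
qed

lemma entry_sum_mult:
  assumes A: "nonneg_mat A" and B: "nonneg_mat B"
  shows "entry_sum (A ** B) \<le> entry_sum A * entry_sum B"
proof -
  have "entry_sum (A ** B) = (\<Sum>j\<in>UNIV. \<Sum>k\<in>UNIV. col_sum A k * B $ k $ j)"
    unfolding entry_sum_eq_sum_col_sum col_sum_matrix_mult by simp
  also have "\<dots> \<le> (\<Sum>j\<in>UNIV. \<Sum>k\<in>UNIV. entry_sum A * B $ k $ j)"
    using A B unfolding nonneg_mat_def
    by (intro sum_mono mult_right_mono col_sum_le_entry_sum) (auto simp: nonneg_mat_def)
  also have "\<dots> = entry_sum A * entry_sum B"
    unfolding entry_sum_eq_sum_col_sum col_sum_def by (simp add: sum_distrib_left)
  finally show ?thesis .
qed

lemma positive_matrix_spreads_mass: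
  fixes P :: "real^'n::finite^'n"
  assumes "\<forall>i j. 0 < P $ i $ j"
  obtains p where "0 < p" and "\<And>A. nonneg_mat A \<Longrightarrow> p * entry_sum A \<le> min_col_sum (A ** P)"
proof
  let ?entries = "range (\<lambda>ij::'n \<times> 'n. P $ fst ij $ snd ij)"
  define p where "p = Min ?entries"
  have "p \<in> ?entries"
    unfolding p_def by (intro Min_in) auto
  then show "0 < p"
    using assms by auto
  have p_le: "p \<le> P $ i $ j" for i j
    unfolding p_def by (rule Min_le) (auto intro: image_eqI[of _ _ "(i, j)"])
  fix A :: "real^'n^'n" assume A: "nonneg_mat A"
  obtain j where j: "min_col_sum (A ** P) = col_sum (A ** P) j"
    using min_col_sum_attained by blast
  have "p * entry_sum A = (\<Sum>k\<in>UNIV. col_sum A k * p)"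
    unfolding entry_sum_eq_sum_col_sum by (simp add: sum_distrib_left mult.commute)
  also have "\<dots> \<le> (\<Sum>k\<in>UNIV. col_sum A k * P $ k $ j)"
    using p_le by (intro sum_mono mult_left_mono col_sum_nonneg A)
  also have "\<dots> = min_col_sum (A ** P)"
    using j by (simp add: col_sum_matrix_mult)
  finally show "p * entry_sum A \<le> min_col_sum (A ** P)" .
qed

lemma allowable_min_col_sum_pos:
  assumes "allowable B" shows "0 < min_col_sum B"
proof -
  obtain j where j: "min_col_sum B = col_sum B j"
    using min_col_sum_attained by blast
  obtain i where i: "0 < B $ i $ j"
    using assms unfolding allowable_def by blast
  have "B $ i $ j \<le> col_sum B j"
    using assms unfolding col_sum_def allowable_def nonneg_mat_def by (intro member_le_sum) auto
  then show ?thesis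
    using i j by simp
qed

lemma nonneg_mat_word_prod: "(\<And>i. nonneg_mat (B i)) \<Longrightarrow> nonneg_mat (word_prod B \<theta> n)"
  by (induction n) (simp_all add: nonneg_mat_mat_1 nonneg_mat_mult)

lemma prod_min_col_sum_le_word_prod:
  assumes B: "\<And>i. nonneg_mat (B i)"
  shows "(\<Prod>i<n. min_col_sum (B (\<theta> i))) \<le> min_col_sum (word_prod B \<theta> n)"
proof (induction n)
  case (Suc n)
  have "(\<Prod>i<Suc n. min_col_sum (B (\<theta> i))) \<le> min_col_sum (word_prod B \<theta> n) * min_col_sum (B (\<theta> n))"
    using Suc min_col_sum_nonneg[OF B] by (simp add: mult_right_mono)
  also have "\<dots> \<le> min_col_sum (word_prod B \<theta> (Suc n))"
    using min_col_sum_mult[OF nonneg_mat_word_prod[OF B] B] by simp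
  finally show ?case .
qed (simp add: min_col_sum_mat_1)

lemma max_col_sum_word_prod_le_prod:
  assumes B: "\<And>i. nonneg_mat (B i)"
  shows "max_col_sum (word_prod B \<theta> n) \<le> (\<Prod>i<n. max_col_sum (B (\<theta> i)))"
proof (induction n)
  case (Suc n)
  have "max_col_sum (word_prod B \<theta> (Suc n)) \<le> max_col_sum (word_prod B \<theta> n) * max_col_sum (B (\<theta> n))"
    using max_col_sum_mult[OF nonneg_mat_word_prod[OF B] B] by simp
  also have "\<dots> \<le> (\<Prod>i<Suc n. max_col_sum (B (\<theta> i)))"
    using Suc max_col_sum_nonneg[OF B] by (simp add: mult_right_mono)
  finally show ?case .
qed (simp add: max_col_sum_mat_1)

lemma word_prod_add: "word_prod B \<theta> (n + m) = word_prod B \<theta> n ** word_prod B (\<lambda>k. \<theta> (k + n)) m"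
  by (induction m) (simp_all add: matrix_mul_assoc add.commute)

lemma word_prod_cong: "(\<And>k. k < n \<Longrightarrow> \<theta> k = \<theta>' k) \<Longrightarrow> word_prod B \<theta> n = word_prod B \<theta>' n"
  by (induction n) auto

section \<open>Products along the shift\<close>

lemma funpow_shift: "(shift ^^ n) \<theta> = (\<lambda>k. \<theta> (k + n))"
  by (induction n arbitrary: \<theta>) (simp_all add: shift_def funpow_swap1)

lemma word_prod_shift_add:
  "word_prod B \<theta> (n + m) = word_prod B \<theta> n ** word_prod B ((shift ^^ n) \<theta>) m"
  by (simp add: word_prod_add funpow_shift)

lemma ergodic_system_shift:
  fixes \<nu> :: "(nat \<Rightarrow> 'i) measure"
  assumes "sets \<nu> = sets seq_space" and "prob_space \<nu>"
    and "shift_invariant \<nu>" and "shift_ergodic \<nu>"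
  shows "ergodic_system \<nu> shift"
proof -
  have "space \<nu> = UNIV"
    using sets_eq_imp_space_eq[OF assms(1)] by (simp add: seq_space_def space_PiM)
  with assms show ?thesis
    unfolding ergodic_system_def ergodic_system_axioms_def shift_invariant_def shift_ergodic_def
    by auto
qed

locale good_allowable_family = ergodic_system \<nu> shift
  for \<nu> :: "(nat \<Rightarrow> 'i::countable) measure" +
  fixes B :: "'i \<Rightarrow> real^'n::finite^'n"
  assumes sets_eq_seq_space: "sets \<nu> = sets seq_space"
    and allowable: "\<And>i. allowable (B i)"
    and good: "good_family B \<nu>"
begin

lemma measurable_coordinate [measurable]: "(\<lambda>\<theta>. \<theta> k) \<in> \<nu> \<rightarrow>\<^sub>M count_space UNIV"
  unfolding measurable_cong_sets[OF sets_eq_seq_space refl] seq_space_def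
  by (rule measurable_component_singleton) simp

lemma measurable_word_prod_entry [measurable]:
  "(\<lambda>\<theta>. word_prod B \<theta> n $ i $ j) \<in> borel_measurable \<nu>"
proof (induction n arbitrary: i j)
  case (Suc n)
  have "(\<lambda>\<theta>. \<Sum>k\<in>UNIV. word_prod B \<theta> n $ i $ k * B (\<theta> n) $ k $ j) \<in> borel_measurable \<nu>"
    using Suc by measurable
  then show ?case
    by (simp add: matrix_matrix_mult_def)
qed simp

lemma measurable_entry_sum_word_prod [measurable]:
  "(\<lambda>\<theta>. entry_sum (word_prod B \<theta> n)) \<in> borel_measurable \<nu>"
  unfolding entry_sum_def by measurable

lemma measurable_min_col_sum_word_prod [measurable]:
  "(\<lambda>\<theta>. min_col_sum (word_prod B \<theta> n)) \<in> borel_measurable \<nu>"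
  unfolding min_col_sum_def by (intro borel_measurable_Min) auto

lemma nonneg_mat_B: "nonneg_mat (B i)"
  using allowable by (simp add: allowable_def)

lemma min_col_sum_B_pos: "0 < min_col_sum (B i)"
  by (rule allowable_min_col_sum_pos[OF allowable])

lemma max_col_sum_B_pos: "0 < max_col_sum (B i)"
  using min_col_sum_B_pos[of i] min_col_sum_le_max_col_sum[of "B i"] by linarith

lemma sum_ln_min_col_sum_le: "(\<Sum>i<n. ln (min_col_sum (B (\<theta> i)))) \<le> ln (min_col_sum (word_prod B \<theta> n))"
proof -
  have "(\<Sum>i<n. ln (min_col_sum (B (\<theta> i)))) = ln (\<Prod>i<n. min_col_sum (B (\<theta> i)))"
    using min_col_sum_B_pos by (simp add: ln_prod less_imp_neq[symmetric])
  also have "\<dots> \<le> ln (min_col_sum (word_prod B \<theta> n))"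
    using min_col_sum_B_pos by (intro ln_mono prod_min_col_sum_le_word_prod nonneg_mat_B prod_pos) auto
  finally show ?thesis .
qed

lemma min_col_sum_word_prod_pos: "0 < min_col_sum (word_prod B \<theta> n)"
proof -
  have "0 < (\<Prod>i<n. min_col_sum (B (\<theta> i)))"
    using min_col_sum_B_pos by (intro prod_pos) auto
  also have "\<dots> \<le> min_col_sum (word_prod B \<theta> n)"
    by (rule prod_min_col_sum_le_word_prod[OF nonneg_mat_B])
  finally show ?thesis .
qed

lemma entry_sum_word_prod_pos: "0 < entry_sum (word_prod B \<theta> n)"
  by (rule less_le_trans[OF min_col_sum_word_prod_pos
        min_col_sum_le_entry_sum[OF nonneg_mat_word_prod[OF nonneg_mat_B]]])

lemma ln_min_col_sum_le_sum: "ln (min_col_sum (word_prod B \<theta> n)) \<le> (\<Sum>i<n. ln (max_col_sum (B (\<theta> i))))"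
proof -
  have "min_col_sum (word_prod B \<theta> n) \<le> max_col_sum (word_prod B \<theta> n)"
    by (rule min_col_sum_le_max_col_sum)
  also have "\<dots> \<le> (\<Prod>i<n. max_col_sum (B (\<theta> i)))"
    by (rule max_col_sum_word_prod_le_prod[OF nonneg_mat_B])
  finally have "ln (min_col_sum (word_prod B \<theta> n)) \<le> ln (\<Prod>i<n. max_col_sum (B (\<theta> i)))"
    using min_col_sum_word_prod_pos by (intro ln_mono)
  also have "\<dots> = (\<Sum>i<n. ln (max_col_sum (B (\<theta> i))))"
    using max_col_sum_B_pos by (simp add: ln_prod less_imp_neq[symmetric])
  finally show ?thesis .
qed

lemma birkhoff_sum_first_coordinate: "birkhoff_sum n (\<lambda>\<theta>. f (\<theta> 0)) \<theta> = (\<Sum>i<n. f (\<theta> i))"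
  by (simp add: birkhoff_sum_def funpow_shift)

lemma integrable_ln_max_col_sum: "integrable \<nu> (\<lambda>\<theta>. ln (max_col_sum (B (\<theta> 0))))"
proof (rule integrableI_bounded)
  show "(\<lambda>\<theta>. ln (max_col_sum (B (\<theta> 0)))) \<in> borel_measurable \<nu>"
    by measurable
  show "(\<integral>\<^sup>+ \<theta>. ennreal (norm (ln (max_col_sum (B (\<theta> 0))))) \<partial>\<nu>) < \<infinity>"
    using good by (simp add: good_family_def)
qed

lemma integrable_ln_min_col_sum: "integrable \<nu> (\<lambda>\<theta>. ln (min_col_sum (B (\<theta> 0))))"
proof (rule integrableI_bounded)
  show "(\<lambda>\<theta>. ln (min_col_sum (B (\<theta> 0)))) \<in> borel_measurable \<nu>"
    by measurable
  show "(\<integral>\<^sup>+ \<theta>. ennreal (norm (ln (min_col_sum (B (\<theta> 0))))) \<partial>\<nu>) < \<infinity>"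
    using good by (simp add: good_family_def)
qed

lemma entry_sum_growth_rate:
  "\<exists>lam. AE \<theta> in \<nu>. (\<lambda>n. ln (entry_sum (word_prod B \<theta> n)) / n) \<longlonglongrightarrow> lam"
proof (rule kingman_submultiplicative[where F = "\<lambda>n \<theta>. entry_sum (word_prod B \<theta> n)"
      and u = "\<lambda>\<theta>. ln CARD('n) + ln (max_col_sum (B (\<theta> 0)))"
      and l = "\<lambda>\<theta>. ln (min_col_sum (B (\<theta> 0)))"])
  show "entry_sum (word_prod B \<theta> (n + m))
      \<le> entry_sum (word_prod B \<theta> n) * entry_sum (word_prod B ((shift ^^ n) \<theta>) m)" for n m \<theta>
    unfolding word_prod_shift_add by (intro entry_sum_mult nonneg_mat_word_prod nonneg_mat_B)
  show "ln (entry_sum (word_prod B \<theta> 1)) \<le> ln CARD('n) + ln (max_col_sum (B (\<theta> 0)))" for \<theta>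
  proof -
    have "ln (entry_sum (word_prod B \<theta> 1)) \<le> ln (CARD('n) * max_col_sum (B (\<theta> 0)))"
      using entry_sum_word_prod_pos[of \<theta> 1] entry_sum_le_card_max_col_sum[of "B (\<theta> 0)"]
      by (intro ln_mono) simp_all
    then show ?thesis
      using max_col_sum_B_pos by (simp add: ln_mult_pos)
  qed
  show "birkhoff_sum n (\<lambda>\<theta>. ln (min_col_sum (B (\<theta> 0)))) \<theta> \<le> ln (entry_sum (word_prod B \<theta> n))" for n \<theta>
  proof -
    have "ln (min_col_sum (word_prod B \<theta> n)) \<le> ln (entry_sum (word_prod B \<theta> n))"
      by (intro ln_mono min_col_sum_word_prod_pos min_col_sum_le_entry_sum
          nonneg_mat_word_prod nonneg_mat_B)
    then show ?thesis
      using sum_ln_min_col_sum_le[of \<theta> n]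
        birkhoff_sum_first_coordinate[of n "\<lambda>i. ln (min_col_sum (B i))" \<theta>] by simp
  qed
qed (simp_all add: entry_sum_word_prod_pos integrable_ln_max_col_sum integrable_ln_min_col_sum)

lemma min_col_sum_growth_rate:
  "\<exists>lam. AE \<theta> in \<nu>. (\<lambda>n. ln (min_col_sum (word_prod B \<theta> n)) / n) \<longlonglongrightarrow> lam"
proof -
  have "\<exists>c. AE \<theta> in \<nu>. (\<lambda>n. ln (inverse (min_col_sum (word_prod B \<theta> n))) / n) \<longlonglongrightarrow> c"
  proof (rule kingman_submultiplicative[where F = "\<lambda>n \<theta>. inverse (min_col_sum (word_prod B \<theta> n))"
        and u = "\<lambda>\<theta>. - ln (min_col_sum (B (\<theta> 0)))"
        and l = "\<lambda>\<theta>. - ln (max_col_sum (B (\<theta> 0)))"])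
    show "inverse (min_col_sum (word_prod B \<theta> (n + m)))
        \<le> inverse (min_col_sum (word_prod B \<theta> n)) * inverse (min_col_sum (word_prod B ((shift ^^ n) \<theta>) m))"
      for n m \<theta>
    proof -
      have "min_col_sum (word_prod B \<theta> n) * min_col_sum (word_prod B ((shift ^^ n) \<theta>) m)
          \<le> min_col_sum (word_prod B \<theta> (n + m))"
        unfolding word_prod_shift_add by (intro min_col_sum_mult nonneg_mat_word_prod nonneg_mat_B)
      then show ?thesis
        using min_col_sum_word_prod_pos
        by (simp add: le_imp_inverse_le mult_pos_pos flip: inverse_mult_distrib)
    qed
    show "birkhoff_sum n (\<lambda>\<theta>. - ln (max_col_sum (B (\<theta> 0)))) \<theta>
        \<le> ln (inverse (min_col_sum (word_prod B \<theta> n)))" for n \<theta>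
      using ln_min_col_sum_le_sum[of \<theta> n]
        birkhoff_sum_first_coordinate[of n "\<lambda>i. - ln (max_col_sum (B i))" \<theta>]
      by (simp add: ln_inverse sum_negf)
  qed (simp_all add: min_col_sum_word_prod_pos ln_inverse
      integrable_ln_max_col_sum integrable_ln_min_col_sum)
  then obtain c where "AE \<theta> in \<nu>. (\<lambda>n. ln (inverse (min_col_sum (word_prod B \<theta> n))) / n) \<longlonglongrightarrow> c"
    by blast
  then have "AE \<theta> in \<nu>. (\<lambda>n. ln (min_col_sum (word_prod B \<theta> n)) / n) \<longlonglongrightarrow> - c"
    by eventually_elim (simp add: ln_inverse tendsto_minus_cancel_left)
  then show ?thesis
    by blast
qed

lemma positive_word_cylinder:
  obtains C n\<^sub>0 p where "C \<in> sets \<nu>" and "0 < measure \<nu> C"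
    and "\<And>\<theta> i. (shift ^^ i) \<theta> \<in> C \<Longrightarrow>
           ln (entry_sum (word_prod B \<theta> i)) + ln p \<le> ln (min_col_sum (word_prod B \<theta> (i + n\<^sub>0)))"
proof -
  obtain n\<^sub>0 \<theta>\<^sub>w where cylinder: "0 < emeasure \<nu> {\<theta> \<in> space \<nu>. \<forall>k<n\<^sub>0. \<theta> k = \<theta>\<^sub>w k}"
    and positive: "\<forall>i j. 0 < word_prod B \<theta>\<^sub>w n\<^sub>0 $ i $ j"
    using good unfolding good_family_def by blast
  define C where "C = {\<theta> \<in> space \<nu>. \<forall>k<n\<^sub>0. \<theta> k = \<theta>\<^sub>w k}"
  have C: "C \<in> sets \<nu>"
    unfolding C_def by measurable
  have C_pos: "0 < measure \<nu> C"
    using cylinder by (simp add: C_def emeasure_eq_measure)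
  obtain p where p: "0 < p"
    and spread: "\<And>A. nonneg_mat A \<Longrightarrow> p * entry_sum A \<le> min_col_sum (A ** word_prod B \<theta>\<^sub>w n\<^sub>0)"
    using positive_matrix_spreads_mass[OF positive] by blast
  have "ln (entry_sum (word_prod B \<theta> i)) + ln p \<le> ln (min_col_sum (word_prod B \<theta> (i + n\<^sub>0)))"
    if "(shift ^^ i) \<theta> \<in> C" for \<theta> i
  proof -
    have "word_prod B ((shift ^^ i) \<theta>) n\<^sub>0 = word_prod B \<theta>\<^sub>w n\<^sub>0"
      using that by (intro word_prod_cong) (simp add: C_def)
    then have "p * entry_sum (word_prod B \<theta> i) \<le> min_col_sum (word_prod B \<theta> (i + n\<^sub>0))"
      using spread[OF nonneg_mat_word_prod[OF nonneg_mat_B]] by (simp add: word_prod_shift_add)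
    then have "ln (p * entry_sum (word_prod B \<theta> i)) \<le> ln (min_col_sum (word_prod B \<theta> (i + n\<^sub>0)))"
      using p entry_sum_word_prod_pos by (intro ln_mono) auto
    then show ?thesis
      using p entry_sum_word_prod_pos by (simp add: ln_mult_pos add.commute)
  qed
  with C C_pos show ?thesis
    by (rule that)
qed

lemma growth_rates_eq:
  assumes entry: "AE \<theta> in \<nu>. (\<lambda>n. ln (entry_sum (word_prod B \<theta> n)) / n) \<longlonglongrightarrow> lam"
    and min: "AE \<theta> in \<nu>. (\<lambda>n. ln (min_col_sum (word_prod B \<theta> n)) / n) \<longlonglongrightarrow> lam_star"
  shows "lam = lam_star"
proof -
  obtain C n\<^sub>0 p where C: "C \<in> sets \<nu>" "0 < measure \<nu> C"
    and jump: "\<And>\<theta> i. (shift ^^ i) \<theta> \<in> C \<Longrightarrow>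
           ln (entry_sum (word_prod B \<theta> i)) + ln p \<le> ln (min_col_sum (word_prod B \<theta> (i + n\<^sub>0)))"
    using positive_word_cylinder by metis
  have "AE \<theta> in \<nu>. lam = lam_star"
    using entry min AE_frequently_visits[OF C]
  proof eventually_elim
    case (elim \<theta>)
    have "\<exists>\<^sub>F i in sequentially.
        ln (entry_sum (word_prod B \<theta> i)) + ln p \<le> ln (min_col_sum (word_prod B \<theta> (i + n\<^sub>0)))"
      using elim(3) by (rule frequently_elim1) (rule jump)
    with elim(1,2) have "lam \<le> lam_star"
      by (rule average_limit_le_of_frequently)
    moreover have "lam_star \<le> lam"
    proof (rule LIMSEQ_le[OF elim(2) elim(1)])
      have "ln (min_col_sum (word_prod B \<theta> n)) \<le> ln (entry_sum (word_prod B \<theta> n))" for n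
        using min_col_sum_le_entry_sum[OF nonneg_mat_word_prod[OF nonneg_mat_B]]
          min_col_sum_word_prod_pos by (rule ln_mono)
      then show "\<exists>N. \<forall>n\<ge>N. ln (min_col_sum (word_prod B \<theta> n)) / n \<le> ln (entry_sum (word_prod B \<theta> n)) / n"
        by (simp add: divide_right_mono)
    qed
    ultimately show ?case
      by simp
  qed
  then show ?thesis
    by simp
qed

end

theorem lemma3p4:
  fixes \<nu> :: "(nat \<Rightarrow> 'i::countable) measure"
    and B :: "'i \<Rightarrow> real^'n::finite^'n"
  assumes "CARD('n) \<ge> 2"
    and "sets \<nu> = sets seq_space"
    and "prob_space \<nu>"
    and "shift_invariant \<nu>"
    and "shift_ergodic \<nu>"
    and "\<forall>i. allowable (B i)"
    and "good_family B \<nu>"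
  shows "\<exists>lam lam_star::real.
           (AE \<theta> in \<nu>. (\<lambda>n. ln (entry_sum (word_prod B \<theta> n)) / real n) \<longlonglongrightarrow> lam)
         \<and> (AE \<theta> in \<nu>. (\<lambda>n. ln (min_col_sum (word_prod B \<theta> n)) / real n) \<longlonglongrightarrow> lam_star)
         \<and> lam = lam_star"
proof -
  interpret good_allowable_family \<nu> B
    using assms
    by (intro good_allowable_family.intro ergodic_system_shift good_allowable_family_axioms.intro)
      auto
  obtain lam where entry: "AE \<theta> in \<nu>. (\<lambda>n. ln (entry_sum (word_prod B \<theta> n)) / n) \<longlonglongrightarrow> lam"
    using entry_sum_growth_rate by blast
  obtain lam_star where min: "AE \<theta> in \<nu>. (\<lambda>n. ln (min_col_sum (word_prod B \<theta> n)) / n) \<longlonglongrightarrow> lam_star"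
    using min_col_sum_growth_rate by blast
  show ?thesis
    using entry min growth_rates_eq[OF entry min] by blast
qed

end
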